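(* Let $p\in[1,\infty]$, let $f\in L^p(0,1)$ and define $F(m)=\int_0^m f(\omega)\,d\omega$ for $m\in[0,1]$. Let $\mu$ be a Borel probability measure on $\mathbb{R}$ with right-continuous cumulative distribution function $M(x)=\mu((-\infty,x])$. Then $F\circ M\in BV(\mathbb{R})$, and its distributional derivative is the measure $g\,\mu$, where, $\mu$-a.e., $$g(x)=\begin{cases} f(M(x)), & \mu(\{x\})=0,\\[1mm] \dfrac{F(M(x))-F(M(x-))}{\mu(\{x\})}, & \mu(\{x\})\neq 0.\end{cases}$$ Moreover $g\in L^p(\mathbb{R},\mu)$ with $\|g\|_{L^p(\mathbb{R},\mu)}\le \|f\|_{L^p(0,1)}$, and equality holds if $\mu$ has no atoms.
   Context: $M(x-)$ denotes the left limit of $M$ at $x$. *)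

theory Defs
  imports "HOL-Probability.Probability"
begin

definition in_Lp :: "'a measure \<Rightarrow> ennreal \<Rightarrow> ('a \<Rightarrow> real) \<Rightarrow> bool" where
  "in_Lp M p f \<longleftrightarrow> f \<in> borel_measurable M \<and>
     (if p = \<infinity> then (\<exists>C. AE x in M. \<bar>f x\<bar> \<le> C)
      else integrable M (\<lambda>x. \<bar>f x\<bar> powr enn2real p))"

definition Lp_norm :: "'a measure \<Rightarrow> ennreal \<Rightarrow> ('a \<Rightarrow> real) \<Rightarrow> real" where
  "Lp_norm M p f =
     (if p = \<infinity> then real_of_ereal (esssup M (\<lambda>x. ereal \<bar>f x\<bar>))
      else (LINT x|M. \<bar>f x\<bar> powr enn2real p) powr (1 / enn2real p))"

definition bounded_variation :: "(real \<Rightarrow> real) \<Rightarrow> bool" where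
  "bounded_variation u \<longleftrightarrow>
     (\<exists>B. \<forall>xs. sorted xs \<longrightarrow>
        (\<Sum>i<length xs - 1. \<bar>u (xs ! Suc i) - u (xs ! i)\<bar>) \<le> B)"

definition test_function :: "(real \<Rightarrow> real) \<Rightarrow> bool" where
  "test_function \<phi> \<longleftrightarrow>
     (\<forall>k x. ((deriv ^^ k) \<phi>) differentiable (at x)) \<and>
     (\<exists>R. \<forall>x. R < \<bar>x\<bar> \<longrightarrow> \<phi> x = 0)"

end

theory Submission
  imports Defs
begin

text \<open>Let \<open>I\<close> be the quantile function of \<open>\<mu>\<close>: it pushes Lebesgue measure on \<open>(0,1)\<close> forward
  to \<open>\<mu>\<close>, and \<open>I w \<le> x \<longleftrightarrow> w \<le> M x\<close>. Hence \<open>F (M x)\<close> is the integral of \<open>f w\<close> over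
  \<open>{w. I w \<le> x}\<close>, and Fubini turns \<open>\<integral> (F \<circ> M) \<phi>'\<close> into \<open>- \<integral> \<phi> (I w) f w dw\<close>. The function
  \<open>g \<circ> I\<close> is the conditional expectation of \<open>f\<close> given \<open>\<sigma>(I)\<close>: the fibre of \<open>I\<close> over a non-atom
  is a single point, and over an atom \<open>x\<close> it is the interval \<open>(M(x-), M x]\<close>, on which the
  conditional expectation is the average of \<open>f\<close>, that is \<open>g x\<close>. Therefore
  \<open>\<integral> \<phi> (I w) f w dw = \<integral> \<phi> g d\<mu>\<close>, and Jensen's inequality for conditional expectations bounds
  the \<open>L\<^sup>p(\<mu>)\<close> norm of \<open>g\<close> by the \<open>L\<^sup>p\<close> norm of \<open>f\<close>. Without atoms \<open>g \<circ> I = f\<close>.\<close>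

section \<open>\<open>L\<^sup>p\<close> norms and conditional expectation\<close>

lemma convex_on_powr_nonneg:
  fixes r :: real
  assumes r: "1 \<le> r"
  shows "convex_on {0..} (\<lambda>x. x powr r)"
proof (rule convex_onI)
  fix t x y :: real
  assume t: "0 < t" "t < 1" and xy: "x \<in> {0..}" "y \<in> {0..}"
  have scale: "(s * c) powr r \<le> s * c powr r" if "0 \<le> s" "s \<le> 1" "0 \<le> c" for s c :: real
  proof -
    have "s powr r \<le> s powr 1" using powr_mono'[OF r, of s] that by simp
    then show ?thesis using that by (simp add: powr_mult mult_right_mono)
  qed
  show "((1 - t) *\<^sub>R x + t *\<^sub>R y) powr r \<le> (1 - t) * x powr r + t * y powr r"
  proof (cases "x = 0 \<or> y = 0")
    case True
    then show ?thesis using scale[of t y] scale[of "1 - t" x] t xy r by auto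
  next
    case False
    with xy have "x \<in> {0<..}" "y \<in> {0<..}" by auto
    from convex_onD[OF powr_convex[OF r] _ _ this] t show ?thesis by simp
  qed
qed simp

lemma convex_on_abs_powr:
  fixes r :: real
  assumes r: "1 \<le> r"
  shows "convex_on UNIV (\<lambda>x. \<bar>x\<bar> powr r)"
proof (rule convex_onI)
  fix t x y :: real
  assume t: "0 < t" "t < 1"
  have "\<bar>(1 - t) *\<^sub>R x + t *\<^sub>R y\<bar> \<le> (1 - t) *\<^sub>R \<bar>x\<bar> + t *\<^sub>R \<bar>y\<bar>"
    using t abs_triangle_ineq[of "(1 - t) * x" "t * y"] by (simp add: abs_mult)
  then have "\<bar>(1 - t) *\<^sub>R x + t *\<^sub>R y\<bar> powr r \<le> ((1 - t) *\<^sub>R \<bar>x\<bar> + t *\<^sub>R \<bar>y\<bar>) powr r"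
    using r by (intro powr_mono2) auto
  also have "\<dots> \<le> (1 - t) * \<bar>x\<bar> powr r + t * \<bar>y\<bar> powr r"
    using t by (intro convex_onD[OF convex_on_powr_nonneg[OF r]]) auto
  finally show "\<bar>(1 - t) *\<^sub>R x + t *\<^sub>R y\<bar> powr r \<le> (1 - t) * \<bar>x\<bar> powr r + t * \<bar>y\<bar> powr r" .
qed simp

lemma one_le_enn2real:
  assumes "1 \<le> p" "p \<noteq> \<infinity>"
  shows "1 \<le> enn2real p"
  using enn2real_mono[OF assms(1)] assms(2) by (simp add: less_top)

lemma Lp_cong_AE:
  assumes [measurable]: "u \<in> borel_measurable N" "v \<in> borel_measurable N"
    and uv: "AE x in N. u x = v x"
  shows "in_Lp N p u = in_Lp N p v" "Lp_norm N p u = Lp_norm N p v"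
proof -
  have bound: "(AE x in N. \<bar>u x\<bar> \<le> C) = (AE x in N. \<bar>v x\<bar> \<le> C)" for C
    using uv by (auto elim: eventually_elim2)
  have powr: "AE x in N. \<bar>u x\<bar> powr enn2real p = \<bar>v x\<bar> powr enn2real p"
    using uv by eventually_elim simp
  have "integrable N (\<lambda>x. \<bar>u x\<bar> powr enn2real p) = integrable N (\<lambda>x. \<bar>v x\<bar> powr enn2real p)"
    by (rule integrable_cong_AE[OF _ _ powr]) measurable
  then show "in_Lp N p u = in_Lp N p v" by (simp add: in_Lp_def bound)
  have "esssup N (\<lambda>x. ereal \<bar>u x\<bar>) = esssup N (\<lambda>x. ereal \<bar>v x\<bar>)"
    by (rule esssup_AE_cong) (use uv in \<open>auto elim: eventually_mono\<close>)
  moreover have "(\<integral>x. \<bar>u x\<bar> powr enn2real p \<partial>N) = (\<integral>x. \<bar>v x\<bar> powr enn2real p \<partial>N)"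
    by (rule integral_cong_AE[OF _ _ powr]) measurable
  ultimately show "Lp_norm N p u = Lp_norm N p v" by (simp add: Lp_norm_def)
qed

lemma Lp_distr:
  assumes [measurable]: "T \<in> measurable N borel" "u \<in> borel_measurable borel"
  shows "in_Lp (distr N borel T) p u = in_Lp N p (\<lambda>x. u (T x))"
    "Lp_norm (distr N borel T) p u = Lp_norm N p (\<lambda>x. u (T x))"
proof -
  have AE_distr: "(AE x in distr N borel T. P x) = (AE x in N. P (T x))"
    if "{x \<in> space borel. P x} \<in> sets borel" for P
    by (rule AE_distr_iff[OF _ that]) simp
  have "integrable (distr N borel T) (\<lambda>x. \<bar>u x\<bar> powr enn2real p) =
      integrable N (\<lambda>x. \<bar>u (T x)\<bar> powr enn2real p)"
    by (rule integrable_distr_eq) measurable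
  moreover have "(AE x in distr N borel T. \<bar>u x\<bar> \<le> C) = (AE x in N. \<bar>u (T x)\<bar> \<le> C)" for C
    by (rule AE_distr) measurable
  ultimately show "in_Lp (distr N borel T) p u = in_Lp N p (\<lambda>x. u (T x))"
    by (simp add: in_Lp_def)
  have "(AE x in distr N borel T. ereal \<bar>u x\<bar> \<le> z) = (AE x in N. ereal \<bar>u (T x)\<bar> \<le> z)" for z
    by (rule AE_distr) measurable
  then have "esssup (distr N borel T) (\<lambda>x. ereal \<bar>u x\<bar>) = esssup N (\<lambda>x. ereal \<bar>u (T x)\<bar>)"
    by (simp add: esssup_eq_AE)
  moreover have "(\<integral>x. \<bar>u x\<bar> powr enn2real p \<partial>distr N borel T) = (\<integral>x. \<bar>u (T x)\<bar> powr enn2real p \<partial>N)"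
    by (rule integral_distr) measurable
  ultimately show "Lp_norm (distr N borel T) p u = Lp_norm N p (\<lambda>x. u (T x))"
    by (simp add: Lp_norm_def)
qed

lemma (in finite_measure) in_Lp_imp_integrable:
  assumes p: "1 \<le> p" and u: "in_Lp M p u"
  shows "integrable M u"
proof (cases "p = \<infinity>")
  case True
  with u obtain C where "AE x in M. \<bar>u x\<bar> \<le> C" by (auto simp: in_Lp_def)
  with u show ?thesis
    by (intro integrable_const_bound[where B = C]) (auto simp: in_Lp_def)
next
  case False
  define r where "r = enn2real p"
  have r: "1 \<le> r" unfolding r_def using one_le_enn2real[OF p False] .
  have le: "\<bar>y\<bar> \<le> 1 + \<bar>y\<bar> powr r" for y :: real
  proof (cases "\<bar>y\<bar> \<le> 1")
    case False
    then have "\<bar>y\<bar> powr 1 \<le> \<bar>y\<bar> powr r" using r by (intro powr_mono) auto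
    then show ?thesis by simp
  qed (smt (verit) powr_ge_zero)
  have "integrable M (\<lambda>x. 1 + \<bar>u x\<bar> powr r)"
    using u False by (simp add: in_Lp_def r_def)
  then show ?thesis
  proof (rule Bochner_Integration.integrable_bound)
    show "u \<in> borel_measurable M" using u by (simp add: in_Lp_def)
    show "AE x in M. norm (u x) \<le> norm (1 + \<bar>u x\<bar> powr r)"
      using le by (intro AE_I2) (smt (verit) real_norm_def)
  qed
qed

lemma (in sigma_finite_subalgebra) real_cond_exp_abs_le_c:
  assumes "integrable M u" "AE x in M. \<bar>u x\<bar> \<le> c"
  shows "AE x in M. \<bar>real_cond_exp M F u x\<bar> \<le> c"
proof -
  have "AE x in M. real_cond_exp M F u x \<le> c"
    by (rule real_cond_exp_le_c) (use assms in \<open>auto elim: eventually_mono\<close>)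
  moreover have "AE x in M. real_cond_exp M F u x \<ge> -c"
    by (rule real_cond_exp_ge_c) (use assms in \<open>auto elim: eventually_mono\<close>)
  ultimately show ?thesis by eventually_elim simp
qed

lemma (in prob_space) esssup_abs_nonneg: "0 \<le> esssup M (\<lambda>x. ereal \<bar>u x\<bar>)"
proof -
  have "esssup M (\<lambda>x. 0) \<le> esssup M (\<lambda>x. ereal \<bar>u x\<bar>)"
    by (rule esssup_mono) auto
  then show ?thesis by (simp add: esssup_const emeasure_space_1)
qed

lemma (in prob_space) Linfty_real_cond_exp:
  assumes N: "subalgebra M N" and u: "in_Lp M \<infinity> u"
  shows "in_Lp M \<infinity> (real_cond_exp M N u)"
    "Lp_norm M \<infinity> (real_cond_exp M N u) \<le> Lp_norm M \<infinity> u"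
proof -
  interpret finite_measure_subalgebra M N by unfold_locales (rule N)
  let ?v = "real_cond_exp M N u"
  obtain C where C: "AE x in M. \<bar>u x\<bar> \<le> C" using u by (auto simp: in_Lp_def)
  have u_int: "integrable M u" using in_Lp_imp_integrable[OF _ u] by simp
  have [measurable]: "u \<in> borel_measurable M" using u by (simp add: in_Lp_def)
  show "in_Lp M \<infinity> ?v" using real_cond_exp_abs_le_c[OF u_int C] by (auto simp: in_Lp_def)
  have "esssup M (\<lambda>x. ereal \<bar>u x\<bar>) \<le> ereal C"
    by (rule esssup_I) (use C in \<open>auto elim: eventually_mono\<close>)
  then obtain c where c: "esssup M (\<lambda>x. ereal \<bar>u x\<bar>) = ereal c"
    using esssup_abs_nonneg[of u] by (cases "esssup M (\<lambda>x. ereal \<bar>u x\<bar>)") auto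
  have "AE x in M. \<bar>u x\<bar> \<le> c"
    using esssup_AE[of "\<lambda>x. ereal \<bar>u x\<bar>" M] c by (auto elim: eventually_mono)
  then have "esssup M (\<lambda>x. ereal \<bar>?v x\<bar>) \<le> ereal c"
    using real_cond_exp_abs_le_c[OF u_int] by (intro esssup_I) (auto elim: eventually_mono)
  from real_of_ereal_positive_mono[OF esssup_abs_nonneg this] c
  show "Lp_norm M \<infinity> ?v \<le> Lp_norm M \<infinity> u" by (simp add: Lp_norm_def)
qed

lemma (in prob_space) Lp_real_cond_exp_finite:
  assumes N: "subalgebra M N" and p: "1 \<le> p" "p \<noteq> \<infinity>" and u: "in_Lp M p u"
  shows "in_Lp M p (real_cond_exp M N u)"
    "Lp_norm M p (real_cond_exp M N u) \<le> Lp_norm M p u"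
proof -
  interpret finite_measure_subalgebra M N by unfold_locales (rule N)
  let ?v = "real_cond_exp M N u"
  define r where "r = enn2real p"
  have r: "1 \<le> r" unfolding r_def using one_le_enn2real[OF p] .
  have u_int: "integrable M u" by (rule in_Lp_imp_integrable[OF p(1) u])
  have u_r_int: "integrable M (\<lambda>x. \<bar>u x\<bar> powr r)" using u p by (simp add: in_Lp_def r_def)
  have jensen: "AE x in M. \<bar>?v x\<bar> powr r \<le> real_cond_exp M N (\<lambda>x. \<bar>u x\<bar> powr r) x"
    by (rule real_cond_exp_jensens_inequality(2)[OF u_int, where I = UNIV])
       (use u_r_int convex_on_abs_powr[OF r] in auto)
  have v_r_int: "integrable M (\<lambda>x. \<bar>?v x\<bar> powr r)"
  proof (rule Bochner_Integration.integrable_bound[OF real_cond_exp_int(1)[OF u_r_int]])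
    show "(\<lambda>x. \<bar>?v x\<bar> powr r) \<in> borel_measurable M" by measurable
    show "AE x in M. norm (\<bar>?v x\<bar> powr r) \<le> norm (real_cond_exp M N (\<lambda>x. \<bar>u x\<bar> powr r) x)"
      using jensen by eventually_elim auto
  qed
  then show "in_Lp M p ?v" using p by (simp add: in_Lp_def r_def)
  have "(\<integral>x. \<bar>?v x\<bar> powr r \<partial>M) \<le> (\<integral>x. real_cond_exp M N (\<lambda>x. \<bar>u x\<bar> powr r) x \<partial>M)"
    by (rule integral_mono_AE[OF v_r_int real_cond_exp_int(1)[OF u_r_int] jensen])
  also have "\<dots> = (\<integral>x. \<bar>u x\<bar> powr r \<partial>M)"
    by (rule real_cond_exp_int(2)[OF u_r_int])
  finally have "(\<integral>x. \<bar>?v x\<bar> powr r \<partial>M) powr (1 / r) \<le> (\<integral>x. \<bar>u x\<bar> powr r \<partial>M) powr (1 / r)"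
    using r by (intro powr_mono2) auto
  then show "Lp_norm M p ?v \<le> Lp_norm M p u" using p by (simp add: Lp_norm_def r_def)
qed

lemma (in prob_space) Lp_real_cond_exp:
  assumes "subalgebra M N" "1 \<le> p" "in_Lp M p u"
  shows "in_Lp M p (real_cond_exp M N u)"
    "Lp_norm M p (real_cond_exp M N u) \<le> Lp_norm M p u"
  using assms Linfty_real_cond_exp Lp_real_cond_exp_finite by (cases "p = \<infinity>"; blast)+

section \<open>Bounded variation and test functions\<close>

lemma bounded_variation_if_increments_dominated:
  fixes u V :: "real \<Rightarrow> real"
  assumes dom: "\<And>a b. a \<le> b \<Longrightarrow> \<bar>u b - u a\<bar> \<le> V b - V a"
    and bounds: "\<And>x. A \<le> V x" "\<And>x. V x \<le> B"
  shows "bounded_variation u"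
  unfolding bounded_variation_def
proof (intro exI allI impI)
  fix xs :: "real list"
  assume sorted: "sorted xs"
  have "(\<Sum>i<length xs - 1. \<bar>u (xs ! Suc i) - u (xs ! i)\<bar>) \<le>
      (\<Sum>i<length xs - 1. V (xs ! Suc i) - V (xs ! i))"
  proof (rule sum_mono)
    fix i assume "i \<in> {..<length xs - 1}"
    then have "xs ! i \<le> xs ! Suc i" using sorted_nth_mono[OF sorted, of i "Suc i"] by auto
    then show "\<bar>u (xs ! Suc i) - u (xs ! i)\<bar> \<le> V (xs ! Suc i) - V (xs ! i)" by (rule dom)
  qed
  also have "\<dots> = V (xs ! (length xs - 1)) - V (xs ! 0)"
    by (rule sum_lessThan_telescope[where f = "\<lambda>i. V (xs ! i)"])
  also have "\<dots> \<le> B - A" using bounds by (intro diff_mono)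
  finally show "(\<Sum>i<length xs - 1. \<bar>u (xs ! Suc i) - u (xs ! i)\<bar>) \<le> B - A" .
qed

lemma test_function_DERIV:
  assumes "test_function \<phi>"
  shows "(\<phi> has_real_derivative deriv \<phi> x) (at x)"
  using assms funpow_0[of deriv \<phi>]
  by (metis DERIV_deriv_iff_real_differentiable test_function_def)

lemma test_function_continuous_on:
  assumes "test_function \<phi>"
  shows "continuous_on UNIV \<phi>" "continuous_on UNIV (deriv \<phi>)"
proof -
  have "((deriv ^^ k) \<phi>) differentiable (at x)" for k x
    using assms by (simp add: test_function_def)
  from this[of 0] this[of 1] show "continuous_on UNIV \<phi>" "continuous_on UNIV (deriv \<phi>)"
    by (auto intro!: differentiable_imp_continuous_on simp: differentiable_on_def differentiable_at_withinI)
qed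

lemma test_function_support:
  assumes "test_function \<phi>"
  obtains R where "0 \<le> R" "\<And>x. R < \<bar>x\<bar> \<Longrightarrow> \<phi> x = 0" "\<And>x. R < \<bar>x\<bar> \<Longrightarrow> deriv \<phi> x = 0"
proof -
  from assms obtain R0 where R0: "\<And>x. R0 < \<bar>x\<bar> \<Longrightarrow> \<phi> x = 0"
    unfolding test_function_def by blast
  define R where "R = max R0 0"
  have vanish: "\<phi> x = 0" if "R < \<bar>x\<bar>" for x using R0 that by (simp add: R_def)
  have deriv_vanish: "deriv \<phi> x = 0" if x: "R < \<bar>x\<bar>" for x
  proof -
    have "((\<lambda>_. 0) has_real_derivative 0) (at x)" by simp
    moreover have "open {y. R < \<bar>y\<bar>}" by (intro open_Collect_less continuous_intros)
    ultimately have "(\<phi> has_real_derivative 0) (at x)"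
      by (rule has_field_derivative_transform_within_open) (use x vanish in auto)
    then show ?thesis by (rule DERIV_imp_deriv)
  qed
  show ?thesis by (rule that[of R]) (simp_all add: R_def vanish deriv_vanish)
qed

lemma test_function_bounded:
  assumes "test_function \<phi>"
  obtains B where "\<And>x. \<bar>\<phi> x\<bar> \<le> B"
proof -
  obtain R where R: "0 \<le> R" "\<And>x. R < \<bar>x\<bar> \<Longrightarrow> \<phi> x = 0" "\<And>x. R < \<bar>x\<bar> \<Longrightarrow> deriv \<phi> x = 0"
    using test_function_support[OF assms] by blast
  have "continuous_on {-R..R} \<phi>"
    using test_function_continuous_on(1)[OF assms] by (rule continuous_on_subset) simp
  then obtain B where B: "0 \<le> B" "\<And>x. x \<in> {-R..R} \<Longrightarrow> norm (\<phi> x) \<le> B"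
    using continuous_on_compact_bound[OF compact_Icc] by blast
  have "\<bar>\<phi> x\<bar> \<le> B" for x
  proof (cases "R < \<bar>x\<bar>")
    case False
    then have "x \<in> {-R..R}" by auto
    then show ?thesis using B(2)[of x] by simp
  qed (simp add: B(1) R(2))
  then show ?thesis by (rule that)
qed

lemma integral_indicator_atLeast_deriv_test_function:
  assumes "test_function \<phi>"
  shows "(\<integral>x. indicator {q..} x * deriv \<phi> x \<partial>lborel) = - \<phi> q"
proof -
  obtain R where R: "0 \<le> R" "\<And>x. R < \<bar>x\<bar> \<Longrightarrow> \<phi> x = 0" "\<And>x. R < \<bar>x\<bar> \<Longrightarrow> deriv \<phi> x = 0"
    using test_function_support[OF assms] by blast
  define T where "T = max R \<bar>q\<bar> + 1"
  have T: "q \<le> T" "R < T" "0 < T" unfolding T_def by auto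
  have "(\<integral>x. indicator {q..} x * deriv \<phi> x \<partial>lborel) = (\<integral>x. indicator {q..T} x *\<^sub>R deriv \<phi> x \<partial>lborel)"
  proof (rule Bochner_Integration.integral_cong[OF refl])
    show "indicator {q..} x * deriv \<phi> x = indicator {q..T} x *\<^sub>R deriv \<phi> x" for x
    proof (cases "x \<le> T")
      case False
      with T have "deriv \<phi> x = 0" by (intro R(3)) simp
      then show ?thesis by simp
    qed (simp split: split_indicator)
  qed
  also have "\<dots> = \<phi> T - \<phi> q"
  proof (rule integral_FTC_atLeastAtMost[OF T(1)])
    show "continuous_on {q..T} (deriv \<phi>)"
      using test_function_continuous_on(2)[OF assms] by (rule continuous_on_subset) simp
    show "(\<phi> has_vector_derivative deriv \<phi> x) (at x within {q..T})" for x
      using test_function_DERIV[OF assms, of x]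
      by (simp add: has_real_derivative_iff_has_vector_derivative[symmetric] has_field_derivative_at_within)
  qed
  also have "\<dots> = - \<phi> q" using R(2)[of T] T by simp
  finally show ?thesis .
qed

lemma integrable_deriv_test_function:
  assumes "test_function \<phi>"
  shows "integrable lborel (deriv \<phi>)"
proof -
  obtain R where R: "0 \<le> R" "\<And>x. R < \<bar>x\<bar> \<Longrightarrow> \<phi> x = 0" "\<And>x. R < \<bar>x\<bar> \<Longrightarrow> deriv \<phi> x = 0"
    using test_function_support[OF assms] by blast
  have "set_integrable lborel {-R..R} (deriv \<phi>)"
    by (intro borel_integrable_atLeastAtMost' continuous_on_subset[OF test_function_continuous_on(2)[OF assms]])
      simp
  moreover have "(\<lambda>x. indicator {-R..R} x * deriv \<phi> x) = deriv \<phi>"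
  proof
    show "indicator {-R..R} x * deriv \<phi> x = deriv \<phi> x" for x
    proof (cases "R < \<bar>x\<bar>")
      case False
      then have "x \<in> {-R..R}" by auto
      then show ?thesis by simp
    qed (simp add: R(3))
  qed
  ultimately show ?thesis by (simp add: set_integrable_def)
qed

section \<open>Quantile functions\<close>

lemma measurable_vimage_algebra_eq_on_fibre:
  fixes u :: "'a \<Rightarrow> 'c::t1_space"
  assumes T: "T \<in> X \<rightarrow> space N" and u: "u \<in> borel_measurable (vimage_algebra X T N)"
    and xy: "x \<in> X" "y \<in> X" "T x = T y"
  shows "u x = u y"
proof -
  have "u -` {u x} \<inter> X \<in> sets (vimage_algebra X T N)"
    using measurable_sets[OF u, of "{u x}"] by simp
  then obtain A where A: "u -` {u x} \<inter> X = T -` A \<inter> X"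
    using sets_vimage_algebra2[OF T] by auto
  then have "T x \<in> A" using xy(1) by blast
  then have "y \<in> u -` {u x} \<inter> X" using A xy by simp
  then show ?thesis by simp
qed

abbreviation lborel_01 :: "real measure" where
  "lborel_01 \<equiv> restrict_space lborel {0<..<1}"

lemma space_lborel_01 [simp]: "space lborel_01 = {0<..<1}"
  by (simp add: space_restrict_space)

lemma sets_lborel_01: "sets lborel_01 = sets (restrict_space borel {0<..<1})"
  by (simp add: sets_restrict_space)

interpretation lborel_01: prob_space lborel_01
  by (auto simp: emeasure_restrict_space intro!: prob_spaceI)

interpretation lborel_lborel_01: pair_sigma_finite lborel lborel_01
  by (simp add: pair_sigma_finite_def lborel.sigma_finite_measure_axioms
      lborel_01.sigma_finite_measure_axioms)

context cdf_distribution
begin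

lemma measurable_I_lborel_01 [measurable]: "I \<in> borel_measurable lborel_01"
  using measurable_CI by (simp add: measurable_cong_sets[OF sets_lborel_01 refl])

lemma measure_singleton_eq: "measure M {x} = C x - measure M {..<x}"
proof -
  have "measure M ({..<x} \<union> {x}) = measure M {..<x} + measure M {x}"
    by (intro finite_measure_Union) auto
  moreover have "{..<x} \<union> {x} = {..x}" by auto
  ultimately show ?thesis by (simp add: cdf_def)
qed

lemma measure_lessThan_le_cdf: "measure M {..<x} \<le> C x"
  using measure_singleton_eq[of x] measure_nonneg[of M "{x}"] by simp

text \<open>\<open>I\<close> abbreviates \<open>\<lambda>w. Inf {x. w \<le> C x}\<close>, so \<open>pseudoinverse\<close> makes the simplifier loop;
  it is applied through \<open>iffD1\<close>/\<open>iffD2\<close> instead.\<close>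

lemma I_less_imp_le_measure_lessThan:
  assumes "0 < w" "w < 1" "I w < x"
  shows "w \<le> measure M {..<x}"
proof -
  have "C y \<le> measure M {..<x}" if "y < x" for y
    unfolding cdf_def using that by (intro finite_measure_mono) auto
  moreover have "w \<le> C (I w)" by (rule pseudoinverse[OF assms(1,2), THEN iffD2]) simp
  ultimately show ?thesis using assms(3) by (meson order_trans)
qed

lemma le_I_imp_measure_lessThan_le:
  assumes "0 < w" "w < 1" "x \<le> I w"
  shows "measure M {..<x} \<le> w"
proof (rule tendsto_upperbound[OF cdf_at_left _ trivial_limit_at_left_real])
  show "\<forall>\<^sub>F y in at_left x. C y \<le> w"
    using eventually_at_left_real[of "x - 1" x, simplified]
  proof (rule eventually_mono)
    fix y assume "x - 1 < y \<and> y < x"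
    then have "\<not> I w \<le> y" using assms(3) by linarith
    then show "C y \<le> w" using pseudoinverse[OF assms(1,2), of y] by linarith
  qed
qed

lemma I_eq_iff:
  assumes "0 < w" "w < 1" "w \<noteq> measure M {..<x}"
  shows "I w = x \<longleftrightarrow> measure M {..<x} < w \<and> w \<le> C x"
proof
  assume x: "I w = x"
  then have "w \<le> C x" by (intro pseudoinverse[OF assms(1,2), THEN iffD2]) simp
  moreover have "measure M {..<x} \<le> w" using x by (intro le_I_imp_measure_lessThan_le[OF assms(1,2)]) simp
  ultimately show "measure M {..<x} < w \<and> w \<le> C x" using assms(3) by simp
next
  assume w: "measure M {..<x} < w \<and> w \<le> C x"
  then have "I w \<le> x" by (intro pseudoinverse[OF assms(1,2), THEN iffD1]) simp
  moreover have "\<not> I w < x" using I_less_imp_le_measure_lessThan[OF assms(1,2), of x] w by auto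
  ultimately show "I w = x" by simp
qed

lemma indicator_I_fibre:
  assumes "0 < w" "w < 1" "w \<noteq> measure M {..<x}"
  shows "indicator (I -` {x} \<inter> {0<..<1}) w = (indicator {measure M {..<x}<..C x} w :: real)"
  using I_eq_iff[OF assms] assms(1,2) by (simp add: indicator_def)

lemma cdf_I_nonatom:
  assumes "0 < w" "w < 1" "measure M {I w} = 0"
  shows "C (I w) = w"
proof -
  have "w \<le> C (I w)" by (rule pseudoinverse[OF assms(1,2), THEN iffD2]) simp
  moreover have "measure M {..<I w} \<le> w" by (rule le_I_imp_measure_lessThan_le[OF assms(1,2)]) simp
  ultimately show ?thesis using measure_singleton_eq[of "I w"] assms(3) by linarith
qed

lemma sets_nonatoms: "{x. measure M {x} = 0} \<in> sets borel"
proof -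
  have "- {x. measure M {x} > 0} \<in> sets borel"
    by (intro borel_comp sets.countable[OF _ countable_atoms]) simp
  also have "- {x. measure M {x} > 0} = {x. measure M {x} = 0}"
    using measure_nonneg[of M] by (auto simp: order.order_iff_strict)
  finally show ?thesis .
qed

abbreviation quantile_algebra :: "real measure" where
  "quantile_algebra \<equiv> vimage_algebra {0<..<1} I borel"

lemma measurable_I_quantile_algebra [measurable]: "I \<in> borel_measurable quantile_algebra"
  by (rule measurable_vimage_algebra1) simp

lemma subalgebra_quantile_algebra: "subalgebra lborel_01 quantile_algebra"
  unfolding subalgebra_def
proof
  show "sets quantile_algebra \<subseteq> sets lborel_01"
    using measurable_sets[OF measurable_I_lborel_01]
    by (auto simp: sets_vimage_algebra2)
qed simp

lemma sets_lborel_01_if_quantile_algebra: "A \<in> sets quantile_algebra \<Longrightarrow> A \<in> sets lborel_01"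
  using subalgebra_quantile_algebra by (auto simp: subalgebra_def)

lemma I_fibre_in_quantile_algebra: "I -` {x} \<inter> {0<..<1} \<in> sets quantile_algebra"
  by (rule in_vimage_algebra) simp

end

sublocale cdf_distribution \<subseteq> quantile: finite_measure_subalgebra lborel_01 quantile_algebra
  by unfold_locales (rule subalgebra_quantile_algebra)

section \<open>A primitive composed with a distribution function\<close>

locale cdf_composition =
  fixes p :: ennreal and f :: "real \<Rightarrow> real" and \<mu> :: "real measure" and F M g :: "real \<Rightarrow> real"
  assumes p: "1 \<le> p"
    and f: "in_Lp lborel_01 p f"
    and F_def: "\<And>m. F m = (LINT w:{0..m}|lborel. f w)"
    and mu: "prob_space \<mu>" "sets \<mu> = sets borel"
    and M_def: "\<And>x. M x = measure \<mu> {..x}"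
    and g_def: "\<And>x. g x =
          (if measure \<mu> {x} = 0 then f (M x)
           else (F (M x) - F (Lim (at_left x) M)) / measure \<mu> {x})"
begin

sublocale mu: cdf_distribution \<mu>
  using mu by (simp add: cdf_distribution_def real_distribution_def real_distribution_axioms_def)

abbreviation cond_f :: "real \<Rightarrow> real" where
  "cond_f \<equiv> real_cond_exp lborel_01 mu.quantile_algebra f"

lemma M_eq_cdf: "M = mu.C"
  by (auto simp: M_def cdf_def)

lemma M_measurable [measurable]: "M \<in> borel_measurable borel"
  unfolding M_eq_cdf by (rule mu.measurable_C)

lemma M_bounds: "0 \<le> M x" "M x \<le> 1"
  unfolding M_eq_cdf by (auto intro: mu.cdf_nonneg mu.cdf_bounded_prob)

lemma M_mono: "x \<le> y \<Longrightarrow> M x \<le> M y"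
  unfolding M_eq_cdf by (rule mu.cdf_nondecreasing)

lemma Lim_at_left_M: "Lim (at_left x) M = measure \<mu> {..<x}"
  unfolding M_eq_cdf by (rule tendsto_Lim[OF trivial_limit_at_left_real mu.cdf_at_left])

lemma f_measurable [measurable]: "f \<in> borel_measurable lborel_01"
  using f by (simp add: in_Lp_def)

lemma f_integrable: "integrable lborel_01 f"
  by (rule lborel_01.in_Lp_imp_integrable[OF p f])

lemma indicator_times_f_measurable:
  assumes "A \<in> sets borel" "A \<subseteq> {0..1}"
  shows "(\<lambda>x. indicator A x * f x) \<in> borel_measurable borel"
proof (rule measurable_discrete_difference[where X = "{0, 1}"])
  have "f \<in> borel_measurable (restrict_space borel {0<..<1})"
    using f_measurable by (simp add: measurable_cong_sets[OF sets_lborel_01 refl])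
  then have "(\<lambda>x. if x \<in> {0<..<1} then f x else 0) \<in> borel_measurable borel"
    by (subst measurable_restrict_space_iff[symmetric]) auto
  then show "(\<lambda>x. indicator A x * (if x \<in> {0<..<1} then f x else 0)) \<in> borel_measurable borel"
    using assms(1) by measurable
  show "indicator A x * (if x \<in> {0<..<1} then f x else 0) = indicator A x * f x" if "x \<notin> {0, 1}" for x
    using that assms(2) by (auto split: split_indicator)
qed auto

lemma F_eq_integral:
  assumes "0 \<le> c" "c \<le> 1"
  shows "F c = (\<integral>u. indicator {..c} u * f u \<partial>lborel_01)"
proof -
  have "F c = (\<integral>w. indicator {0..c} w * f w \<partial>lborel)"
    by (simp add: F_def set_lebesgue_integral_def)
  also have "\<dots> = (\<integral>w. indicator ({0<..<1} \<inter> {..c}) w * f w \<partial>lborel)"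
  proof (rule integral_cong_AE)
    show "(\<lambda>w. indicator {0..c} w * f w) \<in> borel_measurable lborel"
      "(\<lambda>w. indicator ({0<..<1} \<inter> {..c}) w * f w) \<in> borel_measurable lborel"
      using assms by (auto intro!: indicator_times_f_measurable)
    have "AE w in lborel. w \<noteq> 0 \<and> w \<noteq> 1"
      using AE_lborel_singleton[of 0] AE_lborel_singleton[of 1] by eventually_elim auto
    then show "AE w in lborel. indicator {0..c} w * f w = indicator ({0<..<1} \<inter> {..c}) w * f w"
      by eventually_elim (use assms in \<open>auto split: split_indicator\<close>)
  qed
  also have "\<dots> = (\<integral>u. indicator {..c} u * f u \<partial>lborel_01)"
    by (subst integral_restrict_space) (auto simp: indicator_inter_arith mult.assoc)
  finally show ?thesis .
qed

lemma integrable_indicator_times_f: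
  assumes "A \<in> sets borel"
  shows "integrable lborel_01 (\<lambda>u. indicator A u * f u)"
proof (rule Bochner_Integration.integrable_bound[OF f_integrable])
  show "(\<lambda>u. indicator A u * f u) \<in> borel_measurable lborel_01"
    using assms by (intro borel_measurable_times f_measurable measurable_restrict_space1) simp
  show "AE u in lborel_01. norm (indicator A u * f u) \<le> norm (f u)"
    by (intro AE_I2) (simp add: abs_mult indicator_def)
qed

lemma indicator_quantile_fibre:
  assumes "0 < u" "u < 1" "u \<noteq> measure \<mu> {..<x}"
  shows "indicator (mu.I -` {x} \<inter> {0<..<1}) u * f u =
    indicator {..M x} u * f u - indicator {..measure \<mu> {..<x}} u * f u"
proof -
  have "measure \<mu> {..<x} \<le> M x" using mu.measure_lessThan_le_cdf by (simp add: M_eq_cdf)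
  moreover have "indicator (mu.I -` {x} \<inter> {0<..<1}) u = (indicator {measure \<mu> {..<x}<..M x} u :: real)"
    unfolding M_eq_cdf by (rule mu.indicator_I_fibre[OF assms])
  ultimately show ?thesis by (auto simp: indicator_def)
qed

lemma integral_quantile_fibre:
  "(\<integral>u. indicator (mu.I -` {x} \<inter> {0<..<1}) u * f u \<partial>lborel_01) = F (M x) - F (measure \<mu> {..<x})"
proof -
  let ?J = "mu.I -` {x} \<inter> {0<..<1}" and ?L = "measure \<mu> {..<x}"
  have J: "?J \<in> sets lborel_01" by (rule mu.sets_lborel_01_if_quantile_algebra[OF mu.I_fibre_in_quantile_algebra])
  have L: "0 \<le> ?L" "?L \<le> 1" using M_bounds[of x] mu.measure_lessThan_le_cdf[of x] by (simp_all add: M_eq_cdf)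
  have not_L: "AE u in lborel_01. u \<noteq> ?L"
    using AE_lborel_singleton[of ?L] by (subst AE_restrict_space_iff) (auto elim: eventually_mono)
  have "(\<integral>u. indicator ?J u * f u \<partial>lborel_01) =
      (\<integral>u. indicator {..M x} u * f u - indicator {..?L} u * f u \<partial>lborel_01)"
  proof (rule integral_cong_AE)
    show "(\<lambda>u. indicator ?J u * f u) \<in> borel_measurable lborel_01"
      using J by (intro borel_measurable_times f_measurable borel_measurable_indicator)
    show "(\<lambda>u. indicator {..M x} u * f u - indicator {..?L} u * f u) \<in> borel_measurable lborel_01"
      by (intro borel_measurable_diff borel_measurable_integrable integrable_indicator_times_f) simp_all
    show "AE u in lborel_01. indicator ?J u * f u = indicator {..M x} u * f u - indicator {..?L} u * f u"
      using not_L AE_space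
      by eventually_elim (rule indicator_quantile_fibre; simp)
  qed
  also have "\<dots> = (\<integral>u. indicator {..M x} u * f u \<partial>lborel_01) - (\<integral>u. indicator {..?L} u * f u \<partial>lborel_01)"
    by (intro Bochner_Integration.integral_diff integrable_indicator_times_f) simp_all
  also have "\<dots> = F (M x) - F ?L"
    using F_eq_integral M_bounds[of x] L by simp
  finally show ?thesis .
qed

lemma cond_f_atom:
  assumes w: "0 < w" "w < 1" and atom: "measure \<mu> {mu.I w} \<noteq> 0"
  shows "cond_f w = g (mu.I w)"
proof -
  define x where "x = mu.I w"
  let ?J = "mu.I -` {x} \<inter> {0<..<1}"
  have J: "?J \<in> sets mu.quantile_algebra" by (rule mu.I_fibre_in_quantile_algebra)
  have "F (M x) - F (measure \<mu> {..<x}) = (\<integral>u. indicator ?J u * f u \<partial>lborel_01)"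
    by (rule integral_quantile_fibre[symmetric])
  also have "\<dots> = (\<integral>u. indicator ?J u * cond_f u \<partial>lborel_01)"
    using mu.quantile.real_cond_exp_intA[OF f_integrable J] by (simp add: set_lebesgue_integral_def)
  also have "\<dots> = (\<integral>u. indicator ?J u * cond_f w \<partial>lborel_01)"
  proof (rule Bochner_Integration.integral_cong[OF refl])
    have "cond_f u = cond_f w" if "u \<in> ?J" for u
      by (rule measurable_vimage_algebra_eq_on_fibre[OF _ borel_measurable_cond_exp])
        (use that w in \<open>auto simp: x_def\<close>)
    then show "indicator ?J u * cond_f u = indicator ?J u * cond_f w" for u
      by (auto split: split_indicator)
  qed
  also have "\<dots> = measure \<mu> {x} * cond_f w"
    using measure_distr[OF mu.measurable_I_lborel_01, of "{x}"] mu.sets_lborel_01_if_quantile_algebra[OF J]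
    by (simp add: mu.distr_I_eq_M)
  finally show ?thesis
    using atom by (simp add: g_def x_def Lim_at_left_M field_simps)
qed

lemma g_quantile_nonatom:
  assumes "0 < w" "w < 1" "measure \<mu> {mu.I w} = 0"
  shows "g (mu.I w) = f w"
  using mu.cdf_I_nonatom[OF assms] assms(3) by (simp add: g_def M_eq_cdf)

lemma g_measurable [measurable]: "g \<in> borel_measurable borel"
proof (rule measurable_discrete_difference[where X = "{x. measure \<mu> {x} > 0}"])
  show "(\<lambda>x. indicator {0..1} (M x) * f (M x)) \<in> borel_measurable borel"
    using measurable_compose[OF M_measurable indicator_times_f_measurable[of "{0..1}"]] by simp
  show "countable {x. measure \<mu> {x} > 0}" by (rule mu.countable_atoms)
  show "indicator {0..1} (M x) * f (M x) = g x" if "x \<notin> {x. measure \<mu> {x} > 0}" for x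
    using that measure_nonneg[of \<mu> "{x}"] M_bounds[of x] by (auto simp: g_def)
qed auto

lemma cond_f_eq_g_quantile: "AE w in lborel_01. cond_f w = g (mu.I w)"
proof -
  define B where "B = mu.I -` {x. measure \<mu> {x} = 0} \<inter> {0<..<1}"
  have B: "B \<in> sets mu.quantile_algebra"
    unfolding B_def by (rule in_vimage_algebra[OF mu.sets_nonatoms])
  have "(\<lambda>w. indicator B w * g (mu.I w)) \<in> borel_measurable mu.quantile_algebra"
    using B by (intro borel_measurable_times borel_measurable_indicator measurable_compose[OF _ g_measurable])
      simp_all
  moreover have "indicator B w * g (mu.I w) = indicator B w * f w" for w
    using g_quantile_nonatom[of w] by (auto simp: B_def split: split_indicator)
  ultimately have Bf: "(\<lambda>w. indicator B w * f w) \<in> borel_measurable mu.quantile_algebra" by simp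
  have int_Bf: "integrable lborel_01 (\<lambda>w. indicator B w * f w)"
    using integrable_mult_indicator[OF mu.sets_lborel_01_if_quantile_algebra[OF B] f_integrable] by simp
  have "AE w in lborel_01.
      real_cond_exp lborel_01 mu.quantile_algebra (\<lambda>w. indicator B w * f w) w = indicator B w * f w"
    by (rule mu.quantile.real_cond_exp_F_meas[OF int_Bf Bf])
  moreover have "AE w in lborel_01.
      real_cond_exp lborel_01 mu.quantile_algebra (\<lambda>w. indicator B w * f w) w = indicator B w * cond_f w"
    by (rule mu.quantile.real_cond_exp_mult[OF _ f_measurable int_Bf]) (use B in simp)
  ultimately show ?thesis
    using AE_space
  proof eventually_elim
    case (elim w)
    then show ?case
      using g_quantile_nonatom[of w] cond_f_atom[of w] by (cases "w \<in> B") (auto simp: B_def)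
  qed
qed

lemma Lp_g_eq_Lp_cond_f:
  "in_Lp \<mu> q g = in_Lp lborel_01 q cond_f" "Lp_norm \<mu> q g = Lp_norm lborel_01 q cond_f"
proof -
  have "(\<lambda>w. g (mu.I w)) \<in> borel_measurable lborel_01" by measurable
  moreover have "AE w in lborel_01. g (mu.I w) = cond_f w"
    using cond_f_eq_g_quantile by (auto elim: eventually_mono)
  ultimately have "in_Lp lborel_01 q (\<lambda>w. g (mu.I w)) = in_Lp lborel_01 q cond_f"
    "Lp_norm lborel_01 q (\<lambda>w. g (mu.I w)) = Lp_norm lborel_01 q cond_f"
    using Lp_cong_AE[OF _ borel_measurable_cond_exp2] by blast+
  then show "in_Lp \<mu> q g = in_Lp lborel_01 q cond_f" "Lp_norm \<mu> q g = Lp_norm lborel_01 q cond_f"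
    using Lp_distr[OF mu.measurable_I_lborel_01 g_measurable, of q] by (simp_all add: mu.distr_I_eq_M)
qed

lemma g_in_Lp: "in_Lp \<mu> p g"
  using lborel_01.Lp_real_cond_exp(1)[OF mu.subalgebra_quantile_algebra p f] by (simp add: Lp_g_eq_Lp_cond_f)

lemma Lp_norm_g_le: "Lp_norm \<mu> p g \<le> Lp_norm lborel_01 p f"
  using lborel_01.Lp_real_cond_exp(2)[OF mu.subalgebra_quantile_algebra p f] by (simp add: Lp_g_eq_Lp_cond_f)

lemma integrable_g: "integrable \<mu> g"
  by (rule mu.in_Lp_imp_integrable[OF p g_in_Lp])

lemma Lp_norm_g_nonatomic:
  assumes "\<And>x. measure \<mu> {x} = 0"
  shows "Lp_norm \<mu> q g = Lp_norm lborel_01 q f"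
proof -
  have "Lp_norm lborel_01 q (\<lambda>w. g (mu.I w)) = Lp_norm lborel_01 q f"
    by (rule Lp_cong_AE(2)) (use g_quantile_nonatom assms in auto)
  then show ?thesis
    using Lp_distr(2)[OF mu.measurable_I_lborel_01 g_measurable, of q] by (simp add: mu.distr_I_eq_M)
qed

lemma integrable_indicator_times_abs_f:
  assumes "A \<in> sets borel"
  shows "integrable lborel_01 (\<lambda>u. indicator A u * \<bar>f u\<bar>)"
proof -
  have "\<bar>indicator A u * f u\<bar> = indicator A u * \<bar>f u\<bar>" for u
    by (simp add: abs_mult)
  then show ?thesis using integrable_abs[OF integrable_indicator_times_f[OF assms]] by simp
qed

lemma abs_F_diff_le:
  assumes "0 \<le> a" "a \<le> b" "b \<le> 1"
  shows "\<bar>F b - F a\<bar> \<le>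
    (\<integral>u. indicator {..b} u * \<bar>f u\<bar> \<partial>lborel_01) - (\<integral>u. indicator {..a} u * \<bar>f u\<bar> \<partial>lborel_01)"
proof -
  have "F b - F a = (\<integral>u. indicator {..b} u * f u \<partial>lborel_01) - (\<integral>u. indicator {..a} u * f u \<partial>lborel_01)"
    using assms F_eq_integral by simp
  also have "\<dots> = (\<integral>u. indicator {..b} u * f u - indicator {..a} u * f u \<partial>lborel_01)"
    by (intro Bochner_Integration.integral_diff[symmetric] integrable_indicator_times_f) simp_all
  finally have "\<bar>F b - F a\<bar> \<le> (\<integral>u. \<bar>indicator {..b} u * f u - indicator {..a} u * f u\<bar> \<partial>lborel_01)"
    using integral_abs_bound by metis
  also have "\<dots> = (\<integral>u. indicator {..b} u * \<bar>f u\<bar> - indicator {..a} u * \<bar>f u\<bar> \<partial>lborel_01)"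
  proof (rule Bochner_Integration.integral_cong[OF refl])
    show "\<bar>indicator {..b} u * f u - indicator {..a} u * f u\<bar> =
        indicator {..b} u * \<bar>f u\<bar> - indicator {..a} u * \<bar>f u\<bar>" for u
      using assms(2) by (cases "u \<le> a"; cases "u \<le> b") (simp_all add: indicator_def)
  qed
  also have "\<dots> = (\<integral>u. indicator {..b} u * \<bar>f u\<bar> \<partial>lborel_01) - (\<integral>u. indicator {..a} u * \<bar>f u\<bar> \<partial>lborel_01)"
    by (intro Bochner_Integration.integral_diff integrable_indicator_times_abs_f) simp_all
  finally show ?thesis .
qed

lemma bounded_variation_F_M: "bounded_variation (F \<circ> M)"
proof (rule bounded_variation_if_increments_dominated)
  let ?V = "\<lambda>x. \<integral>u. indicator {..M x} u * \<bar>f u\<bar> \<partial>lborel_01"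
  show "\<bar>(F \<circ> M) b - (F \<circ> M) a\<bar> \<le> ?V b - ?V a" if "a \<le> b" for a b
    using abs_F_diff_le[of "M a" "M b"] M_bounds M_mono[OF that] by simp
  show "0 \<le> ?V x" for x
    by (intro integral_nonneg_AE) auto
  show "?V x \<le> (\<integral>u. \<bar>f u\<bar> \<partial>lborel_01)" for x
    using integrable_indicator_times_abs_f[of "{..M x}"] f_integrable
    by (intro integral_mono) (auto simp: indicator_def)
qed

lemma F_M_eq_integral_quantile: "F (M x) = (\<integral>w. (if mu.I w \<le> x then f w else 0) \<partial>lborel_01)"
proof -
  have "F (M x) = (\<integral>w. indicator {..M x} w * f w \<partial>lborel_01)"
    using M_bounds F_eq_integral by simp
  also have "\<dots> = (\<integral>w. (if mu.I w \<le> x then f w else 0) \<partial>lborel_01)"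
  proof (rule Bochner_Integration.integral_cong[OF refl])
    fix w assume "w \<in> space lborel_01"
    then have "w \<le> M x \<longleftrightarrow> mu.I w \<le> x"
      unfolding M_eq_cdf by (intro mu.pseudoinverse) auto
    then show "indicator {..M x} w * f w = (if mu.I w \<le> x then f w else 0)"
      unfolding indicator_def atMost_iff by simp
  qed
  finally show ?thesis .
qed

lemma integral_times_g:
  assumes [measurable]: "\<psi> \<in> borel_measurable borel" and bounded: "\<And>x. \<bar>\<psi> x\<bar> \<le> B"
  shows "(LINT x|\<mu>. \<psi> x * g x) = (\<integral>w. \<psi> (mu.I w) * f w \<partial>lborel_01)"
proof -
  have "(LINT x|\<mu>. \<psi> x * g x) = (\<integral>x. \<psi> x * g x \<partial>distr lborel_01 borel mu.I)"
    by (simp add: mu.distr_I_eq_M)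
  also have "\<dots> = (\<integral>w. \<psi> (mu.I w) * g (mu.I w) \<partial>lborel_01)"
    by (rule integral_distr) measurable
  also have "\<dots> = (\<integral>w. \<psi> (mu.I w) * cond_f w \<partial>lborel_01)"
  proof (rule integral_cong_AE)
    show "(\<lambda>w. \<psi> (mu.I w) * g (mu.I w)) \<in> borel_measurable lborel_01"
      "(\<lambda>w. \<psi> (mu.I w) * cond_f w) \<in> borel_measurable lborel_01"
      by measurable
    show "AE w in lborel_01. \<psi> (mu.I w) * g (mu.I w) = \<psi> (mu.I w) * cond_f w"
      using cond_f_eq_g_quantile by eventually_elim simp
  qed
  also have "\<dots> = (\<integral>w. \<psi> (mu.I w) * f w \<partial>lborel_01)"
  proof (rule mu.quantile.real_cond_exp_intg(2))
    have "integrable lborel_01 (\<lambda>w. B * f w)" using f_integrable by simp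
    then show "integrable lborel_01 (\<lambda>w. \<psi> (mu.I w) * f w)"
    proof (rule Bochner_Integration.integrable_bound)
      show "(\<lambda>w. \<psi> (mu.I w) * f w) \<in> borel_measurable lborel_01" by measurable
      have "\<bar>\<psi> (mu.I w)\<bar> * \<bar>f w\<bar> \<le> \<bar>B\<bar> * \<bar>f w\<bar>" for w
        using bounded[of "mu.I w"] by (intro mult_right_mono) auto
      then show "AE w in lborel_01. norm (\<psi> (mu.I w) * f w) \<le> norm (B * f w)"
        by (intro AE_I2) (simp add: abs_mult)
    qed
    show "(\<lambda>w. \<psi> (mu.I w)) \<in> borel_measurable mu.quantile_algebra" by measurable
    show "f \<in> borel_measurable lborel_01" by (rule f_measurable)
  qed
  finally show ?thesis .
qed

lemma integrable_quantile_kernel: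
  assumes "test_function \<phi>"
  shows "integrable (lborel \<Otimes>\<^sub>M lborel_01) (\<lambda>(x, w). (if mu.I w \<le> x then f w else 0) * deriv \<phi> x)"
proof -
  have [measurable]: "deriv \<phi> \<in> borel_measurable borel"
    by (rule borel_measurable_continuous_onI[OF test_function_continuous_on(2)[OF assms]])
  have "integrable (lborel \<Otimes>\<^sub>M lborel_01) (\<lambda>(x, w). \<bar>deriv \<phi> x\<bar> * \<bar>f w\<bar>)"
  proof (rule lborel_lborel_01.Fubini_integrable)
    show "integrable lborel (\<lambda>x. \<integral>w. norm (case (x, w) of (x, w) \<Rightarrow> \<bar>deriv \<phi> x\<bar> * \<bar>f w\<bar>) \<partial>lborel_01)"
      using integrable_deriv_test_function[OF assms] by (simp add: abs_mult)
    show "AE x in lborel. integrable lborel_01 (\<lambda>w. case (x, w) of (x, w) \<Rightarrow> \<bar>deriv \<phi> x\<bar> * \<bar>f w\<bar>)"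
      using f_integrable by simp
  qed measurable
  then show ?thesis
  proof (rule Bochner_Integration.integrable_bound)
    show "AE z in lborel \<Otimes>\<^sub>M lborel_01.
        norm (case z of (x, w) \<Rightarrow> (if mu.I w \<le> x then f w else 0) * deriv \<phi> x)
          \<le> norm (case z of (x, w) \<Rightarrow> \<bar>deriv \<phi> x\<bar> * \<bar>f w\<bar>)"
      by (intro AE_I2) (auto simp: abs_mult)
  qed measurable
qed

lemma distributional_derivative_F_M:
  assumes \<phi>: "test_function \<phi>"
  shows "integrable lborel (\<lambda>x. (F \<circ> M) x * deriv \<phi> x)"
    and "(LINT x|lborel. (F \<circ> M) x * deriv \<phi> x) = - (LINT x|\<mu>. \<phi> x * g x)"
proof -
  let ?K = "\<lambda>x w. (if mu.I w \<le> x then f w else 0) * deriv \<phi> x"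
  have K: "integrable (lborel \<Otimes>\<^sub>M lborel_01) (\<lambda>(x, w). ?K x w)"
    by (rule integrable_quantile_kernel[OF \<phi>])
  have inner_x: "(\<integral>x. ?K x w \<partial>lborel) = - (\<phi> (mu.I w) * f w)" for w
  proof -
    have "(\<integral>x. ?K x w \<partial>lborel) = (\<integral>x. f w * (indicator {mu.I w..} x * deriv \<phi> x) \<partial>lborel)"
      by (rule Bochner_Integration.integral_cong[OF refl]) (simp add: indicator_def)
    also have "\<dots> = f w * (\<integral>x. indicator {mu.I w..} x * deriv \<phi> x \<partial>lborel)"
      by (rule integral_mult_right_zero)
    also have "\<dots> = - (\<phi> (mu.I w) * f w)"
      by (simp add: integral_indicator_atLeast_deriv_test_function[OF \<phi>])
    finally show ?thesis .
  qed
  have "integrable lborel (\<lambda>x. \<integral>w. ?K x w \<partial>lborel_01)"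
    using lborel_lborel_01.integrable_fst'[OF K] by simp
  then show "integrable lborel (\<lambda>x. (F \<circ> M) x * deriv \<phi> x)"
    by (simp add: F_M_eq_integral_quantile)
  obtain B where B: "\<And>x. \<bar>\<phi> x\<bar> \<le> B" using test_function_bounded[OF \<phi>] by blast
  have [measurable]: "\<phi> \<in> borel_measurable borel"
    by (rule borel_measurable_continuous_onI[OF test_function_continuous_on(1)[OF \<phi>]])
  have "(LINT x|lborel. (F \<circ> M) x * deriv \<phi> x) = (\<integral>x. \<integral>w. ?K x w \<partial>lborel_01 \<partial>lborel)"
    by (simp add: F_M_eq_integral_quantile)
  also have "\<dots> = (\<integral>w. \<integral>x. ?K x w \<partial>lborel \<partial>lborel_01)"
    by (rule lborel_lborel_01.Fubini_integral[symmetric, OF K])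
  also have "\<dots> = - (\<integral>w. \<phi> (mu.I w) * f w \<partial>lborel_01)"
    by (simp add: inner_x)
  also have "\<dots> = - (LINT x|\<mu>. \<phi> x * g x)"
    using integral_times_g[OF _ B] by simp
  finally show "(LINT x|lborel. (F \<circ> M) x * deriv \<phi> x) = - (LINT x|\<mu>. \<phi> x * g x)" .
qed

end

theorem lemma4p2:
  fixes p :: ennreal
    and f :: "real \<Rightarrow> real"
    and \<mu> :: "real measure"
    and F M g :: "real \<Rightarrow> real"
  assumes p: "1 \<le> p"
    and f: "in_Lp (restrict_space lborel {0<..<1}) p f"
    and F_def: "\<And>m. F m = (LINT w:{0..m}|lborel. f w)"
    and mu: "prob_space \<mu>" "sets \<mu> = sets borel"
    and M_def: "\<And>x. M x = measure \<mu> {..x}"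
    and g_def: "\<And>x. g x =
          (if measure \<mu> {x} = 0 then f (M x)
           else (F (M x) - F (Lim (at_left x) M)) / measure \<mu> {x})"
  shows "bounded_variation (F \<circ> M)
    \<and> integrable \<mu> g
    \<and> (\<forall>\<phi>. test_function \<phi> \<longrightarrow>
          integrable lborel (\<lambda>x. (F \<circ> M) x * deriv \<phi> x) \<and>
          (LINT x|lborel. (F \<circ> M) x * deriv \<phi> x) = - (LINT x|\<mu>. \<phi> x * g x))
    \<and> in_Lp \<mu> p g
    \<and> Lp_norm \<mu> p g \<le> Lp_norm (restrict_space lborel {0<..<1}) p f
    \<and> ((\<forall>x. measure \<mu> {x} = 0) \<longrightarrow>
          Lp_norm \<mu> p g = Lp_norm (restrict_space lborel {0<..<1}) p f)"
proof -
  interpret cdf_composition p f \<mu> F M g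
    by (rule cdf_composition.intro) (rule assms)+
  show ?thesis
    using bounded_variation_F_M integrable_g distributional_derivative_F_M g_in_Lp Lp_norm_g_le
      Lp_norm_g_nonatomic by simp
qed

end
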